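(* Let $n=2^m$. The nondeterministic quantum communication complexity of $\mathrm{DFS}$ on these inputs is $\Omega(\log n)$; hence also its exact quantum communication complexity is $\Omega(\log n)$. That is, there is a constant $c>0$ such that for all sufficiently large $m$, every nondeterministic (in particular every exact) quantum communication protocol for $\mathrm{DFS}$ with $n=2^m$ communicates at least $c\log n$ qubits.
   Context: For $r\in\{0,1\}^m$, let $F^r\in\{0,1\}^n$ ($n=2^m$) be the string indexed by $x\in\{0,1\}^m$ with $F^r_x=\sum_i x_i r_i \bmod 2$. For $g\in\{0,1\}^n$, $\mathrm{FS}(F^r,g)=g_r$ (the $r$-th bit of $g$). In the distributed problem $\mathrm{DFS}$, Alice gets $(F^a,g)$ and Bob gets $(F^b,h)$ with $a,b\in\{0,1\}^m$, $g,h\in\{0,1\}^n$, and $\mathrm{DFS}((F^a,g),(F^b,h))=\mathrm{FS}(F^a\oplus F^b,g\oplus h)=(g\oplus h)_{a\oplus b}$. A quantum communication protocol is a two-party protocol in which the parties exchange qubits (cost = number of qubits communicated) and produce an output bit. It is exact if it always outputs the correct value; it is nondeterministic if, for every input, it outputs 1 with positive probability exactly when the function value is 1. $\log$ is base 2. *)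

theory Defs
  imports Complex_Main
begin

text \<open>Bit strings x in {0,1}^m are identified with natural numbers x < 2^m, the i-th bit
  being bit x i.  A string in {0,1}^n (n = 2^m) is a bool list of length n, indexed by x < 2^m.\<close>

definition F :: "nat \<Rightarrow> nat \<Rightarrow> bool list" where
  "F m r = map (\<lambda>x. odd (card {i. i < m \<and> bit x i \<and> bit r i})) [0..<2^m]"

definition xorl :: "bool list \<Rightarrow> bool list \<Rightarrow> bool list" where
  "xorl u v = map2 (\<noteq>) u v"

definition FS :: "nat \<Rightarrow> bool list \<Rightarrow> bool list \<Rightarrow> bool" where
  "FS m f g = g ! (THE r. r < 2^m \<and> F m r = f)"

definition DFS :: "nat \<Rightarrow> bool list \<times> bool list \<Rightarrow> bool list \<times> bool list \<Rightarrow> bool" where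
  "DFS m x y = FS m (xorl (fst x) (fst y)) (xorl (snd x) (snd y))"

definition DFS_inputs :: "nat \<Rightarrow> (bool list \<times> bool list) set" where
  "DFS_inputs m = {(F m a, g) | a g. a < 2^m \<and> length g = 2^m}"

text \<open>Joint basis states (a, c, b): a < dA is Alice's private workspace, c the one-qubit
  channel, b < dB Bob's private workspace.\<close>

type_synonym state = "nat \<times> bool \<times> nat \<Rightarrow> complex"
type_synonym opA = "nat \<times> bool \<Rightarrow> nat \<times> bool \<Rightarrow> complex"
type_synonym opB = "bool \<times> nat \<Rightarrow> bool \<times> nat \<Rightarrow> complex"

definition unitary_on :: "'i set \<Rightarrow> ('i \<Rightarrow> 'i \<Rightarrow> complex) \<Rightarrow> bool" where
  "unitary_on S U \<longleftrightarrow> (\<forall>i\<in>S. \<forall>j\<in>S. (\<Sum>k\<in>S. cnj (U k i) * U k j) = (if i = j then 1 else 0))"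

definition projector_on :: "'i set \<Rightarrow> ('i \<Rightarrow> 'i \<Rightarrow> complex) \<Rightarrow> bool" where
  "projector_on S P \<longleftrightarrow> (\<forall>i\<in>S. \<forall>j\<in>S. P i j = cnj (P j i) \<and> (\<Sum>k\<in>S. P i k * P k j) = P i j)"

definition applyA :: "nat \<Rightarrow> opA \<Rightarrow> state \<Rightarrow> state" where
  "applyA dA U \<psi> = (\<lambda>(a, c, b). \<Sum>p\<in>{0..<dA} \<times> UNIV. U (a, c) p * \<psi> (fst p, snd p, b))"

definition applyB :: "nat \<Rightarrow> opB \<Rightarrow> state \<Rightarrow> state" where
  "applyB dB V \<psi> = (\<lambda>(a, c, b). \<Sum>q\<in>UNIV \<times> {0..<dB}. V (c, b) q * \<psi> (a, fst q, snd q))"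

text \<open>A protocol communicating k qubits: in round j < k the party holding the channel qubit
  (Alice for even j, Bob for odd j) applies a unitary depending on its input to its workspace and
  the channel qubit, and then sends the channel qubit to the other party.  After k rounds the
  party holding the channel qubit performs a two-outcome projective measurement (depending on
  its input) on its workspace and the channel qubit; outcome 1 is the output.  The initial state
  is the basis state (0, 0, 0) (no prior entanglement).\<close>

record ('x, 'y) qprotocol =
  dimA :: nat
  dimB :: nat
  rounds :: nat
  UA :: "nat \<Rightarrow> 'x \<Rightarrow> opA"
  UB :: "nat \<Rightarrow> 'y \<Rightarrow> opB"
  measA :: "'x \<Rightarrow> opA"
  measB :: "'y \<Rightarrow> opB"

definition valid_protocol :: "'x set \<Rightarrow> 'y set \<Rightarrow> ('x, 'y) qprotocol \<Rightarrow> bool" where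
  "valid_protocol X Y P \<longleftrightarrow> dimA P > 0 \<and> dimB P > 0 \<and>
     (\<forall>j < rounds P. \<forall>x\<in>X. unitary_on ({0..<dimA P} \<times> UNIV) (UA P j x)) \<and>
     (\<forall>j < rounds P. \<forall>y\<in>Y. unitary_on (UNIV \<times> {0..<dimB P}) (UB P j y)) \<and>
     (\<forall>x\<in>X. projector_on ({0..<dimA P} \<times> UNIV) (measA P x)) \<and>
     (\<forall>y\<in>Y. projector_on (UNIV \<times> {0..<dimB P}) (measB P y))"

definition init_state :: state where
  "init_state = (\<lambda>s. if s = (0, False, 0) then 1 else 0)"

definition final_state :: "('x, 'y) qprotocol \<Rightarrow> 'x \<Rightarrow> 'y \<Rightarrow> state" where
  "final_state P x y =
     fold (\<lambda>j \<psi>. if even j then applyA (dimA P) (UA P j x) \<psi> else applyB (dimB P) (UB P j y) \<psi>)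
       [0..<rounds P] init_state"

definition sqnorm :: "('x, 'y) qprotocol \<Rightarrow> state \<Rightarrow> real" where
  "sqnorm P \<psi> = (\<Sum>s\<in>{0..<dimA P} \<times> UNIV \<times> {0..<dimB P}. (cmod (\<psi> s))\<^sup>2)"

definition prob_one :: "('x, 'y) qprotocol \<Rightarrow> 'x \<Rightarrow> 'y \<Rightarrow> real" where
  "prob_one P x y = sqnorm P
     (if even (rounds P) then applyA (dimA P) (measA P x) (final_state P x y)
      else applyB (dimB P) (measB P y) (final_state P x y))"

definition nondet_protocol :: "'x set \<Rightarrow> 'y set \<Rightarrow> ('x \<Rightarrow> 'y \<Rightarrow> bool) \<Rightarrow> ('x, 'y) qprotocol \<Rightarrow> bool" where
  "nondet_protocol X Y f P \<longleftrightarrow> (\<forall>x\<in>X. \<forall>y\<in>Y. prob_one P x y > 0 \<longleftrightarrow> f x y)"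

definition exact_protocol :: "'x set \<Rightarrow> 'y set \<Rightarrow> ('x \<Rightarrow> 'y \<Rightarrow> bool) \<Rightarrow> ('x, 'y) qprotocol \<Rightarrow> bool" where
  "exact_protocol X Y f P \<longleftrightarrow> (\<forall>x\<in>X. \<forall>y\<in>Y. prob_one P x y = (if f x y then 1 else 0))"

end

theory Submission
  imports Defs
begin

text \<open>After k rounds the joint state is a sum of 2^k terms, each the product of a factor
  depending only on Alice's input (and her registers) and a factor depending only on Bob's input;
  each round doubles the number of terms because the channel qubit has two basis values.  Hence the
  acceptance probability is a sum of 2 (2^(k+1))^2 products A_r(x) B_r(y), i.e. the
  acceptance-probability matrix has rank at most 2^(2k+3).  On the inputs (F^a, 0) for Alice and
  (F^0, e_b) for Bob, DFS is [a = b], so any nondeterministic protocol has an acceptance matrix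
  whose support is exactly the diagonal of a 2^m \<times> 2^m matrix; such a matrix has full rank,
  so 2^m \<le> 2^(2k+3).\<close>

lemma card_le_of_diagonal_factorization:
  fixes A B :: "'r \<Rightarrow> 'a \<Rightarrow> 'k :: field"
  assumes "finite R" "finite S"
    and "\<forall>a\<in>S. \<forall>b\<in>S. ((\<Sum>r\<in>R. A r a * B r b) \<noteq> 0) = (a = b)"
  shows "card S \<le> card R"
  using assms
proof (induction R arbitrary: S B rule: finite_induct)
  case empty
  then show ?case by (cases "S = {}") auto
next
  case (insert r0 R)
  show ?case
  proof (cases "\<forall>b\<in>S. B r0 b = 0")
    case True
    then have "\<forall>a\<in>S. \<forall>b\<in>S. ((\<Sum>r\<in>R. A r a * B r b) \<noteq> 0) = (a = b)"
      using insert.prems(2) insert.hyps by auto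
    from insert.IH[OF insert.prems(1) this] insert.hyps show ?thesis by simp
  next
    case False
    then obtain b0 where b0: "b0 \<in> S" "B r0 b0 \<noteq> 0" by auto
    \<comment> \<open>Gaussian elimination: clear row r0 of B using column b0, which is orthogonal to every other column of A.\<close>
    define B' where "B' r b = B r b - (B r0 b / B r0 b0) * B r b0" for r b
    have eliminated: "(\<Sum>r\<in>R. A r a * B' r b) = (\<Sum>r\<in>insert r0 R. A r a * B r b)"
      if "a \<in> S - {b0}" "b \<in> S - {b0}" for a b
    proof -
      have "(\<Sum>r\<in>R. A r a * B' r b) = (\<Sum>r\<in>insert r0 R. A r a * B' r b)"
        using insert.hyps b0 by (simp add: B'_def)
      also have "\<dots> = (\<Sum>r\<in>insert r0 R. A r a * B r b)
           - (B r0 b / B r0 b0) * (\<Sum>r\<in>insert r0 R. A r a * B r b0)"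
        by (simp add: B'_def algebra_simps sum_subtractf sum_distrib_left)
      also have "(\<Sum>r\<in>insert r0 R. A r a * B r b0) = 0"
        using insert.prems(2) that b0 by auto
      finally show ?thesis by simp
    qed
    have "\<forall>a\<in>S - {b0}. \<forall>b\<in>S - {b0}. ((\<Sum>r\<in>R. A r a * B' r b) \<noteq> 0) = (a = b)"
      using eliminated insert.prems(2) by auto
    from insert.IH[OF _ this] insert.prems(1) have "card (S - {b0}) \<le> card R" by simp
    then show ?thesis using insert.hyps b0 insert.prems(1)
      by (simp add: card_Diff_singleton_if)
  qed
qed

definition product_decomposable :: "nat \<Rightarrow> ('x \<Rightarrow> 'y \<Rightarrow> state) \<Rightarrow> bool" where
  "product_decomposable N \<Psi> \<longleftrightarrow>
     (\<exists>(f :: nat \<Rightarrow> 'x \<Rightarrow> nat \<times> bool \<Rightarrow> complex) (g :: nat \<Rightarrow> 'y \<Rightarrow> bool \<times> nat \<Rightarrow> complex).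
        \<forall>x y a c b. \<Psi> x y (a, c, b) = (\<Sum>t<N. f t x (a, c) * g t y (c, b)))"

lemma sum_lessThan_double: "(\<Sum>t<2 * (N::nat). h t) = (\<Sum>t<N. h (2 * t) + h (2 * t + 1))"
  by (induction N) (simp_all add: algebra_simps)

lemma sum_times_UNIV_bool: "(\<Sum>p\<in>A \<times> UNIV. h p) = (\<Sum>a\<in>A. h (a, False) + h (a, True))"
proof -
  have "(\<Sum>p\<in>A \<times> UNIV. h p) = (\<Sum>a\<in>A. \<Sum>c\<in>UNIV. h (a, c))"
    by (simp add: sum.cartesian_product)
  then show ?thesis by (simp add: UNIV_bool add.commute)
qed

lemma sum_UNIV_bool_times: "(\<Sum>p\<in>UNIV \<times> A. h p) = (\<Sum>a\<in>A. h (False, a)) + (\<Sum>a\<in>A. h (True, a))"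
proof -
  have "(\<Sum>p\<in>UNIV \<times> A. h p) = (\<Sum>c\<in>UNIV. \<Sum>a\<in>A. h (c, a))"
    by (simp add: sum.cartesian_product)
  then show ?thesis by (simp add: UNIV_bool add.commute)
qed

lemma product_decomposable_applyA:
  assumes "product_decomposable N \<Psi>"
  shows "product_decomposable (2 * N) (\<lambda>x y. applyA dA (U x) (\<Psi> x y))"
proof -
  obtain f g where fg: "\<And>x y a c b. \<Psi> x y (a, c, b) = (\<Sum>t<N. f t x (a, c) * g t y (c, b))"
    using assms unfolding product_decomposable_def by blast
  \<comment> \<open>term 2t + [c] of the new state is term t of the old one with the channel value fixed to c\<close>
  define f' where "f' t x p = (\<Sum>a'\<in>{0..<dA}. U x p (a', odd t) * f (t div 2) x (a', odd t))" for t x p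
  define g' :: "nat \<Rightarrow> _ \<Rightarrow> bool \<times> nat \<Rightarrow> complex"
    where "g' t y q = g (t div 2) y (odd t, snd q)" for t y q
  have "applyA dA (U x) (\<Psi> x y) (a, c, b) = (\<Sum>t<2 * N. f' t x (a, c) * g' t y (c, b))" for x y a c b
  proof -
    have "applyA dA (U x) (\<Psi> x y) (a, c, b)
        = (\<Sum>t<N. \<Sum>p\<in>{0..<dA} \<times> UNIV. U x (a, c) p * f t x p * g t y (snd p, b))"
      by (simp add: applyA_def fg sum_distrib_left mult.assoc sum.swap[of _ _ "{..<N}"])
    also have "\<dots> = (\<Sum>t<N. f' (2 * t) x (a, c) * g' (2 * t) y (c, b)
                          + f' (2 * t + 1) x (a, c) * g' (2 * t + 1) y (c, b))"
      by (simp add: sum_times_UNIV_bool f'_def g'_def sum_distrib_right sum.distrib)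
    finally show ?thesis by (simp add: sum_lessThan_double)
  qed
  then show ?thesis unfolding product_decomposable_def by blast
qed

lemma product_decomposable_applyB:
  assumes "product_decomposable N \<Psi>"
  shows "product_decomposable (2 * N) (\<lambda>x y. applyB dB (V y) (\<Psi> x y))"
proof -
  obtain f g where fg: "\<And>x y a q. \<Psi> x y (a, q) = (\<Sum>t<N. f t x (a, fst q) * g t y q)"
    using assms unfolding product_decomposable_def by fastforce
  define f' :: "nat \<Rightarrow> _ \<Rightarrow> nat \<times> bool \<Rightarrow> complex"
    where "f' t x p = f (t div 2) x (fst p, odd t)" for t x p
  define g' where "g' t y q = (\<Sum>b'\<in>{0..<dB}. V y q (odd t, b') * g (t div 2) y (odd t, b'))" for t y q
  have "applyB dB (V y) (\<Psi> x y) (a, c, b) = (\<Sum>t<2 * N. f' t x (a, c) * g' t y (c, b))" for x y a c b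
  proof -
    have "applyB dB (V y) (\<Psi> x y) (a, c, b)
        = (\<Sum>t<N. \<Sum>q\<in>UNIV \<times> {0..<dB}. V y (c, b) q * f t x (a, fst q) * g t y q)"
      by (simp add: applyB_def fg sum_distrib_left mult.assoc sum.swap[of _ _ "{..<N}"])
    also have "\<dots> = (\<Sum>t<N. f' (2 * t) x (a, c) * g' (2 * t) y (c, b)
                          + f' (2 * t + 1) x (a, c) * g' (2 * t + 1) y (c, b))"
      by (simp add: sum_UNIV_bool_times f'_def g'_def sum_distrib_left sum.distrib algebra_simps)
    finally show ?thesis by (simp add: sum_lessThan_double)
  qed
  then show ?thesis unfolding product_decomposable_def by blast
qed

lemma product_decomposable_init_state: "product_decomposable 1 (\<lambda>x y. init_state)"
proof -
  define f :: "nat \<Rightarrow> 'x \<Rightarrow> nat \<times> bool \<Rightarrow> complex"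
    where "f t x p = (if p = (0, False) then 1 else 0)" for t x p
  define g :: "nat \<Rightarrow> 'y \<Rightarrow> bool \<times> nat \<Rightarrow> complex"
    where "g t y q = (if snd q = 0 then 1 else 0)" for t y q
  have "init_state (a, c, b) = (\<Sum>t<1. f t x (a, c) * g t y (c, b))" for x y a c b
    by (simp add: init_state_def f_def g_def)
  then show ?thesis unfolding product_decomposable_def by blast
qed

lemma product_decomposable_rounds:
  "product_decomposable (2 ^ k) (\<lambda>x y. fold (\<lambda>j \<psi>. if even j then applyA (dimA P) (UA P j x) \<psi>
       else applyB (dimB P) (UB P j y) \<psi>) [0..<k] init_state)"
proof (induction k)
  case 0
  then show ?case using product_decomposable_init_state by simp
next
  case (Suc k)
  then show ?case
    using product_decomposable_applyA[OF Suc.IH, of "dimA P" "UA P k"]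
      product_decomposable_applyB[OF Suc.IH, of "dimB P" "UB P k"]
    by (cases "even k") simp_all
qed

lemma product_decomposable_measured_state:
  "product_decomposable (2 ^ Suc (rounds P)) (\<lambda>x y.
     if even (rounds P) then applyA (dimA P) (measA P x) (final_state P x y)
     else applyB (dimB P) (measB P y) (final_state P x y))"
  using product_decomposable_applyA[OF product_decomposable_rounds[of "rounds P" P], where dA = "dimA P" and U = "measA P"]
    product_decomposable_applyB[OF product_decomposable_rounds[of "rounds P" P], where dB = "dimB P" and V = "measB P"]
  by (cases "even (rounds P)") (simp_all add: final_state_def)

lemma sqnorm_product_decomposable:
  assumes "product_decomposable N \<Psi>"
  shows "\<exists>A B. \<forall>x y. complex_of_real (sqnorm P (\<Psi> x y)) =
           (\<Sum>r\<in>{..<N} \<times> {..<N} \<times> (UNIV :: bool set). A r x * B r y)"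
proof -
  obtain f g where fg: "\<And>x y a c b. \<Psi> x y (a, c, b) = (\<Sum>t<N. f t x (a, c) * g t y (c, b))"
    using assms unfolding product_decomposable_def by blast
  define A where "A r x = (\<Sum>a\<in>{0..<dimA P}.
      f (fst (snd r)) x (a, snd (snd r)) * cnj (f (fst r) x (a, snd (snd r))))" for r x
  define B where "B r y = (\<Sum>b\<in>{0..<dimB P}.
      g (fst (snd r)) y (snd (snd r), b) * cnj (g (fst r) y (snd (snd r), b)))" for r y
  have "complex_of_real (sqnorm P (\<Psi> x y)) = (\<Sum>r\<in>{..<N} \<times> {..<N} \<times> UNIV. A r x * B r y)" for x y
  proof -
    let ?term = "\<lambda>a c b t t'. f t' x (a, c) * cnj (f t x (a, c)) * (g t' y (c, b) * cnj (g t y (c, b)))"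
    have "complex_of_real (sqnorm P (\<Psi> x y))
        = (\<Sum>a\<in>{0..<dimA P}. \<Sum>c\<in>UNIV. \<Sum>b\<in>{0..<dimB P}. \<Psi> x y (a, c, b) * cnj (\<Psi> x y (a, c, b)))"
      by (simp add: sqnorm_def sum.cartesian_product complex_norm_square[symmetric] del: of_real_power)
    also have "\<dots> = (\<Sum>a\<in>{0..<dimA P}. \<Sum>c\<in>UNIV. \<Sum>b\<in>{0..<dimB P}. \<Sum>t<N. \<Sum>t'<N. ?term a c b t t')"
      by (simp add: fg sum_distrib_left sum_distrib_right algebra_simps)
    also have "\<dots> = (\<Sum>t<N. \<Sum>t'<N. \<Sum>c\<in>UNIV. \<Sum>a\<in>{0..<dimA P}. \<Sum>b\<in>{0..<dimB P}. ?term a c b t t')"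
      by (simp add: sum.swap[of _ "{0..<dimB P}" "{..<N}"] sum.swap[of _ "{0..<dimA P}" "{..<N}"]
          sum.swap[of _ UNIV "{..<N}"] sum.swap[of _ "{0..<dimA P}" UNIV])
    also have "\<dots> = (\<Sum>t<N. \<Sum>t'<N. \<Sum>c\<in>UNIV. A (t, t', c) x * B (t, t', c) y)"
      by (simp add: A_def B_def sum_product)
    also have "\<dots> = (\<Sum>r\<in>{..<N} \<times> {..<N} \<times> UNIV. A r x * B r y)"
      by (simp add: sum.cartesian_product)
    finally show ?thesis .
  qed
  then show ?thesis by blast
qed

lemma card_le_of_diagonal_acceptance:
  assumes "finite S"
    and "\<forall>a\<in>S. \<forall>b\<in>S. (prob_one P (xs a) (ys b) \<noteq> 0) = (a = b)"
  shows "card S \<le> 2 ^ (2 * rounds P + 3)"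
proof -
  obtain A B where AB: "\<And>x y. complex_of_real (prob_one P x y) =
      (\<Sum>r\<in>{..<(2::nat) ^ Suc (rounds P)} \<times> {..<(2::nat) ^ Suc (rounds P)} \<times> (UNIV :: bool set). A r x * B r y)"
    using sqnorm_product_decomposable[OF product_decomposable_measured_state, of P P]
    unfolding prob_one_def by blast
  have "card S \<le> card ({..<(2::nat) ^ Suc (rounds P)} \<times> {..<(2::nat) ^ Suc (rounds P)} \<times> (UNIV :: bool set))"
    by (rule card_le_of_diagonal_factorization[where A = "\<lambda>r a. A r (xs a)" and B = "\<lambda>r b. B r (ys b)"])
      (use assms AB[symmetric] in auto)
  then show ?thesis
    by (simp add: card_cartesian_product power_add power_mult_distrib[symmetric] power_mult)
qed

lemma nondet_protocol_if_exact_protocol: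
  "exact_protocol X Y f P \<Longrightarrow> nondet_protocol X Y f P"
  by (simp add: exact_protocol_def nondet_protocol_def)

lemma nondet_protocol_prob_one_nonzero_iff:
  assumes "nondet_protocol X Y f P" "x \<in> X" "y \<in> Y"
  shows "(prob_one P x y \<noteq> 0) = f x y"
proof -
  have "prob_one P x y \<ge> 0"
    by (simp add: prob_one_def sqnorm_def sum_nonneg)
  then show ?thesis using assms unfolding nondet_protocol_def by force
qed

lemma length_F [simp]: "length (F m r) = 2 ^ m"
  by (simp add: F_def)

lemma F_0: "F m 0 = replicate (2 ^ m) False"
  by (simp add: F_def list_eq_iff_nth_eq)

lemma nth_F_power_of_two:
  assumes "i < m"
  shows "F m r ! (2 ^ i) = bit r i"
proof -
  have "{j. j < m \<and> bit ((2::nat) ^ i) j \<and> bit r j} = (if bit r i then {i} else {})"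
    using assms by (auto simp: bit_exp_iff)
  then show ?thesis using assms by (simp add: F_def)
qed

lemma inj_on_F: "inj_on (F m) {..<2 ^ m}"
proof
  fix r a assume "r \<in> {..<2 ^ m}" "a \<in> {..<2 ^ m}" and F_eq: "F m r = F m a"
  then have "take_bit m r = r" "take_bit m a = a"
    by (simp_all add: take_bit_nat_eq_self_iff)
  moreover have "bit r i = bit a i" if "i < m" for i
    using nth_F_power_of_two[OF that, of r] nth_F_power_of_two[OF that, of a] F_eq by simp
  ultimately show "r = a"
    by (metis bit_eq_iff bit_take_bit_iff)
qed

lemma xorl_replicate_False_right: "length u = n \<Longrightarrow> xorl u (replicate n False) = u"
  by (simp add: xorl_def list_eq_iff_nth_eq)

lemma xorl_replicate_False_left: "length u = n \<Longrightarrow> xorl (replicate n False) u = u"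
  by (simp add: xorl_def list_eq_iff_nth_eq)

lemma DFS_identity_inputs:
  assumes "a < 2 ^ m" "b < 2 ^ m"
  shows "DFS m (F m a, replicate (2 ^ m) False) (F m 0, map (\<lambda>i. i = b) [0..<2 ^ m]) = (a = b)"
proof -
  have "(THE r. r < 2 ^ m \<and> F m r = F m a) = a"
    using assms(1) inj_on_F[of m] by (intro the_equality) (auto dest: inj_onD)
  then show ?thesis using assms
    by (simp add: DFS_def FS_def F_0 xorl_replicate_False_right xorl_replicate_False_left)
qed

lemma nondet_protocol_DFS_rounds:
  assumes "nondet_protocol (DFS_inputs m) (DFS_inputs m) (DFS m) P"
  shows "m \<le> 2 * rounds P + 3"
proof -
  define xs where "xs a = (F m a, replicate (2 ^ m) False)" for a
  define ys where "ys b = (F m 0, map (\<lambda>i. i = b) [0..<2 ^ m])" for b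
  have "\<forall>a\<in>{..<2 ^ m}. \<forall>b\<in>{..<2 ^ m}. (prob_one P (xs a) (ys b) \<noteq> 0) = (a = b)"
  proof (intro ballI)
    fix a b :: nat assume "a \<in> {..<2 ^ m}" "b \<in> {..<2 ^ m}"
    moreover from this have "xs a \<in> DFS_inputs m" "ys b \<in> DFS_inputs m"
      by (auto simp: xs_def ys_def DFS_inputs_def)
    ultimately show "(prob_one P (xs a) (ys b) \<noteq> 0) = (a = b)"
      using nondet_protocol_prob_one_nonzero_iff[OF assms] DFS_identity_inputs unfolding xs_def ys_def by simp
  qed
  from card_le_of_diagonal_acceptance[OF _ this] have "(2::nat) ^ m \<le> 2 ^ (2 * rounds P + 3)"
    by simp
  then show ?thesis by simp
qed

theorem lemma5:
  shows "\<exists>c > 0. \<exists>M. \<forall>m \<ge> M. \<forall>P :: (bool list \<times> bool list, bool list \<times> bool list) qprotocol.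
     valid_protocol (DFS_inputs m) (DFS_inputs m) P \<and>
     (nondet_protocol (DFS_inputs m) (DFS_inputs m) (DFS m) P \<or>
      exact_protocol (DFS_inputs m) (DFS_inputs m) (DFS m) P)
     \<longrightarrow> real (rounds P) \<ge> c * log 2 (real (2 ^ m))"
proof (intro exI[of _ "1/4"] conjI exI[of _ 6] allI impI)
  fix m :: nat and P :: "(bool list \<times> bool list, bool list \<times> bool list) qprotocol"
  assume "6 \<le> m"
    and "valid_protocol (DFS_inputs m) (DFS_inputs m) P \<and>
      (nondet_protocol (DFS_inputs m) (DFS_inputs m) (DFS m) P \<or>
       exact_protocol (DFS_inputs m) (DFS_inputs m) (DFS m) P)"
  then have "m \<le> 2 * rounds P + 3"
    using nondet_protocol_DFS_rounds nondet_protocol_if_exact_protocol by blast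
  with \<open>6 \<le> m\<close> show "real (rounds P) \<ge> 1/4 * log 2 (real (2 ^ m))"
    by (simp add: log_nat_power)
qed simp

end
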